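(* Let $\mathcal X_1,\mathcal X_2$ each be either $(0,1)$ or $(0,1)^\infty$, let $\mu_1,\mu_2$ be probability measures on $\mathcal X_1,\mathcal X_2$ respectively, and let $B\subset\mathcal X_1\times\mathcal X_2$ be a Borel set. Assume that $S_{\mu_1-\nu_1,\mu_2-\nu_2}(B)=S_{\mu_1,\mu_2}(B)-\nu(B)$ for every positive measure $\nu$ on $B$ whose marginals $\nu_1,\nu_2$ satisfy $\nu_1\le\mu_1$ and $\nu_2\le\mu_2$. Then the supremum $S_{\mu_1,\mu_2}(B)$ is attained: there is a probability measure $\mu$ on $\mathcal X_1\times\mathcal X_2$ with marginals $\mu_1,\mu_2$ and $\mu(B)=S_{\mu_1,\mu_2}(B)$.
   Context: For finite positive measures $\lambda_1,\lambda_2$ on $\mathcal X_1,\mathcal X_2$ with $\lambda_1(\mathcal X_1)=\lambda_2(\mathcal X_2)$, and a Borel set $B\subset\mathcal X_1\times\mathcal X_2$, define $S_{\lambda_1,\lambda_2}(B)$ as the supremum of $\lambda(B)$ over all positive measures $\lambda$ on $\mathcal X_1\times\mathcal X_2$ with marginals $\lambda_1,\lambda_2$. *)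

theory Defs
  imports "HOL-Probability.Probability"
begin

definition unit_interval :: "real measure" where
  "unit_interval = restrict_space borel {0<..<1}"

text \<open>The countable product (0,1)^\<infinity> with its Borel (= product) sigma-algebra.\<close>
definition unit_cube_inf :: "(nat \<Rightarrow> real) measure" where
  "unit_cube_inf = PiM UNIV (\<lambda>_. unit_interval)"

definition meas_iso :: "'a measure \<Rightarrow> 'b measure \<Rightarrow> bool" where
  "meas_iso M N \<longleftrightarrow> (\<exists>f g. f \<in> M \<rightarrow>\<^sub>M N \<and> g \<in> N \<rightarrow>\<^sub>M M \<and>
      (\<forall>x\<in>space M. g (f x) = x) \<and> (\<forall>y\<in>space N. f (g y) = y))"

definition paper_space :: "'a measure \<Rightarrow> bool" where
  "paper_space M \<longleftrightarrow> meas_iso M unit_interval \<or> meas_iso M unit_cube_inf"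

definition marg1 :: "('a \<times> 'b) measure \<Rightarrow> 'a measure \<Rightarrow> 'a measure" where
  "marg1 l M1 = distr l M1 fst"
definition marg2 :: "('a \<times> 'b) measure \<Rightarrow> 'b measure \<Rightarrow> 'b measure" where
  "marg2 l M2 = distr l M2 snd"

definition couplings :: "'a measure \<Rightarrow> 'b measure \<Rightarrow> 'a measure \<Rightarrow> 'b measure
    \<Rightarrow> ('a \<times> 'b) measure set" where
  "couplings M1 M2 l1 l2 = {l. sets l = sets (M1 \<Otimes>\<^sub>M M2) \<and>
      marg1 l M1 = l1 \<and> marg2 l M2 = l2}"

definition S_sup :: "'a measure \<Rightarrow> 'b measure \<Rightarrow> 'a measure \<Rightarrow> 'b measure
    \<Rightarrow> ('a \<times> 'b) set \<Rightarrow> ennreal" where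
  "S_sup M1 M2 l1 l2 B = (SUP l\<in>couplings M1 M2 l1 l2. emeasure l B)"

text \<open>Difference of measures M - N (used only when N \<le> M setwise, N finite).\<close>
definition measure_diff :: "'a measure \<Rightarrow> 'a measure \<Rightarrow> 'a measure" where
  "measure_diff M N = measure_of (space M) (sets M) (\<lambda>A. emeasure M A - emeasure N A)"

end

theory Submission
  imports Defs
begin

text \<open>
  Call a measure \<open>\<nu>\<close> concentrated on \<open>B\<close> whose marginals lie below \<open>\<mu>\<^sub>1, \<mu>\<^sub>2\<close> a sub-coupling,
  and let \<open>S\<close> be the supremum to be attained. Given a sub-coupling \<open>\<nu>\<close>, add to it the restriction to \<open>B\<close> of a
  coupling of the residual marginals \<open>\<mu>\<^sub>i - \<nu>\<^sub>i\<close> that is \<open>\<epsilon>\<close>-optimal for \<open>B\<close>: the result is again a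
  sub-coupling, and by the hypothesis its mass on \<open>B\<close> is at least \<open>S - \<epsilon>\<close>. Iterating with
  \<open>\<epsilon> = 1/(n+1)\<close> gives an increasing sequence of sub-couplings whose supremum \<open>\<nu>\<^sub>\<infinity>\<close> is a
  sub-coupling with \<open>\<nu>\<^sub>\<infinity>(B) \<ge> S\<close>. The residual marginals of \<open>\<nu>\<^sub>\<infinity>\<close> have equal mass, so adding
  their normalised product measure to \<open>\<nu>\<^sub>\<infinity>\<close> yields a coupling \<open>\<mu> \<ge> \<nu>\<^sub>\<infinity>\<close>; hence \<open>\<mu>(B) = S\<close>.
\<close>

definition add_measure :: "'a measure \<Rightarrow> 'a measure \<Rightarrow> 'a measure" where
  "add_measure M N = measure_of (space M) (sets M) (\<lambda>A. emeasure M A + emeasure N A)"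

lemma sets_add_measure [simp]: "sets (add_measure M N) = sets M"
  by (simp add: add_measure_def)

lemma emeasure_add_measure:
  assumes "sets N = sets M" and "A \<in> sets M"
  shows "emeasure (add_measure M N) A = emeasure M A + emeasure N A"
  unfolding add_measure_def
proof (rule emeasure_measure_of_sigma[OF sets.sigma_algebra_axioms _ _ assms(2)])
  show "positive (sets M) (\<lambda>A. emeasure M A + emeasure N A)"
    by (simp add: positive_def)
  show "countably_additive (sets M) (\<lambda>A. emeasure M A + emeasure N A)"
    using assms(1) by (auto simp: countably_additive_def suminf_add [symmetric] suminf_emeasure)
qed

lemma le_add_measure:
  assumes "sets N = sets M"
  shows "M \<le> add_measure M N"
  using assms by (subst le_measure) (auto simp: emeasure_add_measure)

lemma sets_measure_diff [simp]: "sets (measure_diff M N) = sets M"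
  by (simp add: measure_diff_def)

lemma emeasure_measure_diff:
  assumes "finite_measure M" and "sets N = sets M"
    and le: "\<And>A. A \<in> sets M \<Longrightarrow> emeasure N A \<le> emeasure M A"
    and "A \<in> sets M"
  shows "emeasure (measure_diff M N) A = emeasure M A - emeasure N A"
  unfolding measure_diff_def
proof (rule emeasure_measure_of_sigma[OF sets.sigma_algebra_axioms _ _ assms(4)])
  show "positive (sets M) (\<lambda>A. emeasure M A - emeasure N A)"
    by (simp add: positive_def)
  have N_finite: "emeasure N A \<noteq> \<infinity>" if "A \<in> sets M" for A
    using le[OF that] finite_measure.emeasure_finite[OF assms(1), of A] by (auto simp: top_unique)
  show "countably_additive (sets M) (\<lambda>A. emeasure M A - emeasure N A)"
    unfolding countably_additive_def
  proof (intro allI impI)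
    fix F :: "nat \<Rightarrow> _"
    assume F: "range F \<subseteq> sets M" "disjoint_family F" "\<Union> (range F) \<in> sets M"
    have "(\<Sum>i. emeasure M (F i) - emeasure N (F i)) + emeasure N (\<Union> (range F))
        = (\<Sum>i. emeasure M (F i) - emeasure N (F i) + emeasure N (F i))"
      using F assms(2) suminf_emeasure[of F N, symmetric] by (simp add: suminf_add)
    also have "\<dots> = (\<Sum>i. emeasure M (F i))"
      using F le by (intro suminf_cong diff_add_cancel_ennreal) auto
    also have "\<dots> = emeasure M (\<Union> (range F))"
      using F by (simp add: suminf_emeasure)
    finally have sum: "(\<Sum>i. emeasure M (F i) - emeasure N (F i)) + emeasure N (\<Union> (range F))
        = emeasure M (\<Union> (range F))" .
    show "(\<Sum>i. emeasure M (F i) - emeasure N (F i))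
        = emeasure M (\<Union> (range F)) - emeasure N (\<Union> (range F))"
      using N_finite[OF F(3)] by (simp add: sum[symmetric])
  qed
qed

lemma add_measure_diff:
  assumes "finite_measure M" and "sets N = sets M"
    and "\<And>A. A \<in> sets M \<Longrightarrow> emeasure N A \<le> emeasure M A"
  shows "add_measure N (measure_diff M N) = M"
proof (rule measure_eqI)
  fix A assume "A \<in> sets (add_measure N (measure_diff M N))"
  with assms show "emeasure (add_measure N (measure_diff M N)) A = emeasure M A"
    by (simp add: emeasure_add_measure emeasure_measure_diff add_diff_inverse_ennreal)
qed (use assms in simp)

lemma sets_marg1 [simp]: "sets (marg1 \<nu> M1) = sets M1"
  and sets_marg2 [simp]: "sets (marg2 \<nu> M2) = sets M2"
  by (simp_all add: marg1_def marg2_def)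

lemma emeasure_marg1:
  assumes "sets \<nu> = sets (M1 \<Otimes>\<^sub>M M2)" and "A \<in> sets M1"
  shows "emeasure (marg1 \<nu> M1) A = emeasure \<nu> (A \<times> space M2)"
proof -
  have "fst -` A \<inter> space \<nu> = A \<times> space M2"
    using sets_eq_imp_space_eq[OF assms(1)] sets.sets_into_space[OF assms(2)]
    by (auto simp: space_pair_measure)
  then show ?thesis
    using assms unfolding marg1_def by (simp add: emeasure_distr measurable_cong_sets[OF assms(1) refl])
qed

lemma emeasure_marg2:
  assumes "sets \<nu> = sets (M1 \<Otimes>\<^sub>M M2)" and "A \<in> sets M2"
  shows "emeasure (marg2 \<nu> M2) A = emeasure \<nu> (space M1 \<times> A)"
proof -
  have "snd -` A \<inter> space \<nu> = space M1 \<times> A"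
    using sets_eq_imp_space_eq[OF assms(1)] sets.sets_into_space[OF assms(2)]
    by (auto simp: space_pair_measure)
  then show ?thesis
    using assms unfolding marg2_def by (simp add: emeasure_distr measurable_cong_sets[OF assms(1) refl])
qed

lemma marg1_add_measure:
  assumes "sets \<nu> = sets (M1 \<Otimes>\<^sub>M M2)" and "sets \<rho> = sets (M1 \<Otimes>\<^sub>M M2)"
  shows "marg1 (add_measure \<nu> \<rho>) M1 = add_measure (marg1 \<nu> M1) (marg1 \<rho> M1)"
  using assms by (intro measure_eqI) (simp_all add: emeasure_marg1 emeasure_add_measure)

lemma marg2_add_measure:
  assumes "sets \<nu> = sets (M1 \<Otimes>\<^sub>M M2)" and "sets \<rho> = sets (M1 \<Otimes>\<^sub>M M2)"
  shows "marg2 (add_measure \<nu> \<rho>) M2 = add_measure (marg2 \<nu> M2) (marg2 \<rho> M2)"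
  using assms by (intro measure_eqI) (simp_all add: emeasure_marg2 emeasure_add_measure)

lemma emeasure_marg1_mono:
  assumes "\<nu> \<le> \<mu>" and "sets \<nu> = sets (M1 \<Otimes>\<^sub>M M2)" and "sets \<mu> = sets (M1 \<Otimes>\<^sub>M M2)"
    and "A \<in> sets M1"
  shows "emeasure (marg1 \<nu> M1) A \<le> emeasure (marg1 \<mu> M1) A"
  using assms by (simp add: emeasure_marg1 le_measureD3)

lemma emeasure_marg2_mono:
  assumes "\<nu> \<le> \<mu>" and "sets \<nu> = sets (M1 \<Otimes>\<^sub>M M2)" and "sets \<mu> = sets (M1 \<Otimes>\<^sub>M M2)"
    and "A \<in> sets M2"
  shows "emeasure (marg2 \<nu> M2) A \<le> emeasure (marg2 \<mu> M2) A"
  using assms by (simp add: emeasure_marg2 le_measureD3)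

lemma emeasure_space_coupling:
  assumes "\<mu> \<in> couplings M1 M2 l1 l2"
  shows "emeasure \<mu> (space \<mu>) = emeasure l1 (space M1)"
proof -
  have \<mu>: "sets \<mu> = sets (M1 \<Otimes>\<^sub>M M2)" "marg1 \<mu> M1 = l1"
    using assms by (auto simp: couplings_def)
  then have "space \<mu> = space M1 \<times> space M2"
    by (metis sets_eq_imp_space_eq space_pair_measure)
  then show ?thesis
    using emeasure_marg1[OF \<mu>(1) sets.top] \<mu>(2) by simp
qed

lemma S_sup_le_emeasure_space: "S_sup M1 M2 l1 l2 B \<le> emeasure l1 (space M1)"
  unfolding S_sup_def
proof (rule SUP_least)
  fix \<mu> assume \<mu>: "\<mu> \<in> couplings M1 M2 l1 l2"
  have "emeasure \<mu> B \<le> emeasure \<mu> (space \<mu>)"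
    by (rule emeasure_space)
  with emeasure_space_coupling[OF \<mu>] show "emeasure \<mu> B \<le> emeasure l1 (space M1)"
    by simp
qed

lemma scaled_product_in_couplings:
  assumes "sets l1 = sets M1" and "sets l2 = sets M2"
    and l1: "emeasure l1 (space M1) = m" and l2: "emeasure l2 (space M2) = m" and "m \<noteq> \<infinity>"
  shows "scale_measure (1 / m) (l1 \<Otimes>\<^sub>M l2) \<in> couplings M1 M2 l1 l2"
proof -
  let ?\<rho> = "scale_measure (1 / m) (l1 \<Otimes>\<^sub>M l2)"
  have space: "space l1 = space M1" "space l2 = space M2"
    using assms(1,2) by (simp_all add: sets_eq_imp_space_eq[of l1] sets_eq_imp_space_eq[of l2])
  interpret l1: finite_measure l1
    using assms space by (intro finite_measureI) auto
  interpret l2: finite_measure l2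
    using assms space by (intro finite_measureI) auto
  \<comment> \<open>For \<open>m = 0\<close> the factor \<open>1 / m\<close> is \<open>\<infinity>\<close>, but then both marginals are null.\<close>
  have cancel: "1 / m * (a * m) = a" if "a \<le> m" for a
    using that \<open>m \<noteq> \<infinity>\<close>
    by (cases "m = 0") (simp_all add: ennreal_divide_times ennreal_mult_divide_eq)
  have sets_\<rho>: "sets ?\<rho> = sets (M1 \<Otimes>\<^sub>M M2)"
    using assms(1,2) by (simp cong: sets_pair_measure_cong)
  have "marg1 ?\<rho> M1 = l1"
  proof (rule measure_eqI)
    fix A assume "A \<in> sets (marg1 ?\<rho> M1)"
    then have A: "A \<in> sets l1"
      using assms(1) by simp
    have "emeasure l1 A \<le> m"
      using l1 space emeasure_space[of l1 A] by simp
    then show "emeasure (marg1 ?\<rho> M1) A = emeasure l1 A"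
      using A assms(1) l2 space l2.emeasure_pair_measure_Times[OF A sets.top]
      by (simp add: emeasure_marg1[OF sets_\<rho>] cancel)
  qed (use assms(1) in simp)
  moreover have "marg2 ?\<rho> M2 = l2"
  proof (rule measure_eqI)
    fix A assume "A \<in> sets (marg2 ?\<rho> M2)"
    then have A: "A \<in> sets l2"
      using assms(2) by simp
    have "emeasure l2 A \<le> m"
      using l2 space emeasure_space[of l2 A] by simp
    then show "emeasure (marg2 ?\<rho> M2) A = emeasure l2 A"
      using A assms(2) l1 space l2.emeasure_pair_measure_Times[OF sets.top[of l1] A]
      by (simp add: emeasure_marg2[OF sets_\<rho>] cancel[unfolded mult.commute[of _ m]])
  qed (use assms(2) in simp)
  ultimately show ?thesis
    using sets_\<rho> by (simp add: couplings_def)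
qed

lemma add_measure_in_couplings:
  assumes "finite_measure l1" and "finite_measure l2"
    and "sets l1 = sets M1" and "sets l2 = sets M2" and "sets \<nu> = sets (M1 \<Otimes>\<^sub>M M2)"
    and "\<forall>A\<in>sets M1. emeasure (marg1 \<nu> M1) A \<le> emeasure l1 A"
    and "\<forall>A\<in>sets M2. emeasure (marg2 \<nu> M2) A \<le> emeasure l2 A"
    and "\<rho> \<in> couplings M1 M2 (measure_diff l1 (marg1 \<nu> M1)) (measure_diff l2 (marg2 \<nu> M2))"
  shows "add_measure \<nu> \<rho> \<in> couplings M1 M2 l1 l2"
proof -
  have \<rho>: "sets \<rho> = sets (M1 \<Otimes>\<^sub>M M2)"
    "marg1 \<rho> M1 = measure_diff l1 (marg1 \<nu> M1)" "marg2 \<rho> M2 = measure_diff l2 (marg2 \<nu> M2)"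
    using assms(8) by (auto simp: couplings_def)
  have "add_measure (marg1 \<nu> M1) (measure_diff l1 (marg1 \<nu> M1)) = l1"
    using assms(1,3,6) by (intro add_measure_diff) auto
  then have marg1: "marg1 (add_measure \<nu> \<rho>) M1 = l1"
    using assms(5) \<rho> by (simp add: marg1_add_measure)
  have "add_measure (marg2 \<nu> M2) (measure_diff l2 (marg2 \<nu> M2)) = l2"
    using assms(2,4,7) by (intro add_measure_diff) auto
  then have marg2: "marg2 (add_measure \<nu> \<rho>) M2 = l2"
    using assms(5) \<rho> by (simp add: marg2_add_measure)
  show ?thesis
    using assms(5) marg1 marg2 by (simp add: couplings_def)
qed

definition subcouplings_on :: "'a measure \<Rightarrow> 'b measure \<Rightarrow> 'a measure \<Rightarrow> 'b measure
    \<Rightarrow> ('a \<times> 'b) set \<Rightarrow> ('a \<times> 'b) measure set" where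
  "subcouplings_on M1 M2 l1 l2 B = {\<nu>. sets \<nu> = sets (M1 \<Otimes>\<^sub>M M2) \<and>
      emeasure \<nu> (space (M1 \<Otimes>\<^sub>M M2) - B) = 0 \<and>
      (\<forall>A\<in>sets M1. emeasure (marg1 \<nu> M1) A \<le> emeasure l1 A) \<and>
      (\<forall>A\<in>sets M2. emeasure (marg2 \<nu> M2) A \<le> emeasure l2 A)}"

lemma null_measure_in_subcouplings_on: "null_measure (M1 \<Otimes>\<^sub>M M2) \<in> subcouplings_on M1 M2 l1 l2 B"
  by (simp add: subcouplings_on_def emeasure_marg1 emeasure_marg2)

lemma emeasure_SUP_incseq:
  assumes "incseq M" and "\<And>i. sets (M i) = sets N" and "A \<in> sets N"
  shows "emeasure (SUP i. M i) A = (SUP i. emeasure (M i) A)"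
proof (rule emeasure_SUP_chain)
  show "Complete_Partial_Order.chain (\<le>) (range M)"
    using \<open>incseq M\<close> by (auto simp: chain_def incseq_def) (meson nle_le)
qed (use assms in auto)

lemma SUP_in_subcouplings_on:
  assumes "B \<in> sets (M1 \<Otimes>\<^sub>M M2)"
    and "incseq \<nu>" and \<nu>: "\<And>i. \<nu> i \<in> subcouplings_on M1 M2 l1 l2 B"
  shows "(SUP i. \<nu> i) \<in> subcouplings_on M1 M2 l1 l2 B"
proof -
  have sets_\<nu>: "sets (\<nu> i) = sets (M1 \<Otimes>\<^sub>M M2)" for i
    using \<nu> by (simp add: subcouplings_on_def)
  have sets_lim: "sets (SUP i. \<nu> i) = sets (M1 \<Otimes>\<^sub>M M2)"
    using sets_\<nu> by (simp add: sets_SUP)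
  note emeasure_lim = emeasure_SUP_incseq[OF \<open>incseq \<nu>\<close> sets_\<nu>]
  have "emeasure (SUP i. \<nu> i) (space (M1 \<Otimes>\<^sub>M M2) - B) = 0"
    using \<nu> assms(1) by (simp add: emeasure_lim subcouplings_on_def)
  moreover have "emeasure (marg1 (SUP i. \<nu> i) M1) A \<le> emeasure l1 A" if A: "A \<in> sets M1" for A
  proof -
    have "emeasure (\<nu> i) (A \<times> space M2) \<le> emeasure l1 A" for i
      using \<nu>[of i] A emeasure_marg1[OF sets_\<nu> A] by (auto simp: subcouplings_on_def)
    then show ?thesis
      using A by (simp add: emeasure_marg1 sets_lim emeasure_lim SUP_least)
  qed
  moreover have "emeasure (marg2 (SUP i. \<nu> i) M2) A \<le> emeasure l2 A" if A: "A \<in> sets M2" for A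
  proof -
    have "emeasure (\<nu> i) (space M1 \<times> A) \<le> emeasure l2 A" for i
      using \<nu>[of i] A emeasure_marg2[OF sets_\<nu> A] by (auto simp: subcouplings_on_def)
    then show ?thesis
      using A by (simp add: emeasure_marg2 sets_lim emeasure_lim SUP_least)
  qed
  ultimately show ?thesis
    using sets_lim by (simp add: subcouplings_on_def)
qed

locale equal_mass_marginals =
  fixes M1 :: "'a measure" and M2 :: "'b measure" and l1 :: "'a measure" and l2 :: "'b measure"
  assumes finite_l1: "finite_measure l1" and finite_l2: "finite_measure l2"
    and sets_l1: "sets l1 = sets M1" and sets_l2: "sets l2 = sets M2"
    and equal_mass: "emeasure l1 (space M1) = emeasure l2 (space M2)"
begin

lemma residual_couplings_nonempty:
  assumes "\<nu> \<in> subcouplings_on M1 M2 l1 l2 B"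
  shows "couplings M1 M2 (measure_diff l1 (marg1 \<nu> M1)) (measure_diff l2 (marg2 \<nu> M2)) \<noteq> {}"
proof -
  let ?r1 = "measure_diff l1 (marg1 \<nu> M1)" and ?r2 = "measure_diff l2 (marg2 \<nu> M2)"
  let ?m = "emeasure l1 (space M1) - emeasure \<nu> (space M1 \<times> space M2)"
  have \<nu>: "sets \<nu> = sets (M1 \<Otimes>\<^sub>M M2)"
    "\<forall>A\<in>sets M1. emeasure (marg1 \<nu> M1) A \<le> emeasure l1 A"
    "\<forall>A\<in>sets M2. emeasure (marg2 \<nu> M2) A \<le> emeasure l2 A"
    using assms by (auto simp: subcouplings_on_def)
  have "emeasure ?r1 (space M1) = emeasure l1 (space M1) - emeasure (marg1 \<nu> M1) (space M1)"
    using \<nu>(2) sets_l1 by (intro emeasure_measure_diff[OF finite_l1]) auto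
  then have "emeasure ?r1 (space M1) = ?m"
    using \<nu>(1) by (simp add: emeasure_marg1)
  moreover have "emeasure ?r2 (space M2) = emeasure l2 (space M2) - emeasure (marg2 \<nu> M2) (space M2)"
    using \<nu>(3) sets_l2 by (intro emeasure_measure_diff[OF finite_l2]) auto
  then have "emeasure ?r2 (space M2) = ?m"
    using \<nu>(1) equal_mass by (simp add: emeasure_marg2)
  moreover have "?m \<noteq> \<infinity>"
    using finite_measure.emeasure_finite[OF finite_l1, of "space M1"] by (simp add: ennreal_minus_eq_top)
  ultimately have "scale_measure (1 / ?m) (?r1 \<Otimes>\<^sub>M ?r2) \<in> couplings M1 M2 ?r1 ?r2"
    using sets_l1 sets_l2 by (intro scaled_product_in_couplings) auto
  then show ?thesis
    by blast
qed

lemma add_residual_coupling_in_couplings: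
  assumes "\<nu> \<in> subcouplings_on M1 M2 l1 l2 B"
    and "\<rho> \<in> couplings M1 M2 (measure_diff l1 (marg1 \<nu> M1)) (measure_diff l2 (marg2 \<nu> M2))"
  shows "add_measure \<nu> \<rho> \<in> couplings M1 M2 l1 l2"
  using assms(1) by (intro add_measure_in_couplings[OF finite_l1 finite_l2 sets_l1 sets_l2 _ _ _ assms(2)])
    (auto simp: subcouplings_on_def)

lemma subcoupling_le_coupling:
  assumes "\<nu> \<in> subcouplings_on M1 M2 l1 l2 B"
  shows "\<exists>\<mu>\<in>couplings M1 M2 l1 l2. \<nu> \<le> \<mu>"
proof -
  obtain \<rho> where \<rho>: "\<rho> \<in> couplings M1 M2 (measure_diff l1 (marg1 \<nu> M1)) (measure_diff l2 (marg2 \<nu> M2))"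
    using residual_couplings_nonempty[OF assms] by blast
  have "\<nu> \<le> add_measure \<nu> \<rho>"
    using assms \<rho> by (intro le_add_measure) (simp add: subcouplings_on_def couplings_def)
  then show ?thesis
    using add_residual_coupling_in_couplings[OF assms \<rho>] by blast
qed

lemma add_restricted_in_subcouplings_on:
  assumes B: "B \<in> sets (M1 \<Otimes>\<^sub>M M2)" and \<nu>: "\<nu> \<in> subcouplings_on M1 M2 l1 l2 B"
    and \<rho>: "\<rho> \<in> couplings M1 M2 (measure_diff l1 (marg1 \<nu> M1)) (measure_diff l2 (marg2 \<nu> M2))"
  shows "add_measure \<nu> (density \<rho> (indicator B)) \<in> subcouplings_on M1 M2 l1 l2 B"
proof -
  let ?\<nu>' = "add_measure \<nu> (density \<rho> (indicator B))" and ?\<mu> = "add_measure \<nu> \<rho>"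
  have sets: "sets \<nu> = sets (M1 \<Otimes>\<^sub>M M2)" "sets \<rho> = sets (M1 \<Otimes>\<^sub>M M2)"
    using \<nu> \<rho> by (simp_all add: subcouplings_on_def couplings_def)
  have emeasure_\<nu>': "emeasure ?\<nu>' A = emeasure \<nu> A + emeasure \<rho> (B \<inter> A)"
    if "A \<in> sets (M1 \<Otimes>\<^sub>M M2)" for A
    using sets B that by (simp add: emeasure_add_measure emeasure_restricted)
  have le: "?\<nu>' \<le> ?\<mu>"
  proof (rule le_measure[THEN iffD2], simp, intro ballI)
    fix A assume "A \<in> sets ?\<nu>'"
    then have A: "A \<in> sets (M1 \<Otimes>\<^sub>M M2)"
      using sets by simp
    have "emeasure ?\<nu>' A \<le> emeasure \<nu> A + emeasure \<rho> A"
      using A sets by (simp add: emeasure_\<nu>' add_left_mono emeasure_mono)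
    also have "\<dots> = emeasure ?\<mu> A"
      using A sets by (simp add: emeasure_add_measure)
    finally show "emeasure ?\<nu>' A \<le> emeasure ?\<mu> A" .
  qed
  have \<mu>: "marg1 ?\<mu> M1 = l1" "marg2 ?\<mu> M2 = l2"
    using add_residual_coupling_in_couplings[OF \<nu> \<rho>] by (simp_all add: couplings_def)
  have "emeasure (marg1 ?\<nu>' M1) A \<le> emeasure l1 A" if "A \<in> sets M1" for A
    using emeasure_marg1_mono[OF le _ _ that] sets \<mu> by simp
  moreover have "emeasure (marg2 ?\<nu>' M2) A \<le> emeasure l2 A" if "A \<in> sets M2" for A
    using emeasure_marg2_mono[OF le _ _ that] sets \<mu> by simp
  moreover have "emeasure ?\<nu>' (space (M1 \<Otimes>\<^sub>M M2) - B) = 0"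
    using \<nu> B by (simp add: emeasure_\<nu>' subcouplings_on_def Int_Diff)
  ultimately show ?thesis
    using sets by (simp add: subcouplings_on_def)
qed

lemma subcouplings_on_approx_S_sup:
  assumes B: "B \<in> sets (M1 \<Otimes>\<^sub>M M2)"
    and residual_S_sup: "\<And>\<nu>. \<nu> \<in> subcouplings_on M1 M2 l1 l2 B \<Longrightarrow>
      S_sup M1 M2 (measure_diff l1 (marg1 \<nu> M1)) (measure_diff l2 (marg2 \<nu> M2)) B
        = S_sup M1 M2 l1 l2 B - emeasure \<nu> B"
    and \<nu>: "\<nu> \<in> subcouplings_on M1 M2 l1 l2 B" and "0 < e"
  shows "\<exists>\<nu>'\<in>subcouplings_on M1 M2 l1 l2 B. \<nu> \<le> \<nu>' \<and> S_sup M1 M2 l1 l2 B \<le> emeasure \<nu>' B + ennreal e"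
proof -
  let ?S = "S_sup M1 M2 l1 l2 B"
  let ?R = "couplings M1 M2 (measure_diff l1 (marg1 \<nu> M1)) (measure_diff l2 (marg2 \<nu> M2))"
  have "?S \<noteq> \<infinity>"
    using S_sup_le_emeasure_space[of M1 M2 l1 l2 B] finite_measure.emeasure_finite[OF finite_l1, of "space M1"]
    by (auto simp: top_unique)
  then have "?S - emeasure \<nu> B \<noteq> \<infinity>"
    by (simp add: ennreal_minus_eq_top)
  moreover have "?S - emeasure \<nu> B = (SUP \<rho>\<in>?R. emeasure \<rho> B)"
    using residual_S_sup[OF \<nu>] by (simp add: S_sup_def)
  ultimately obtain \<rho> where \<rho>: "\<rho> \<in> ?R" and approx: "?S - emeasure \<nu> B < emeasure \<rho> B + e"
    using SUP_approx_ennreal[OF \<open>0 < e\<close> residual_couplings_nonempty[OF \<nu>]] by blast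
  let ?\<nu>' = "add_measure \<nu> (density \<rho> (indicator B))"
  have sets: "sets \<nu> = sets (M1 \<Otimes>\<^sub>M M2)" "sets \<rho> = sets (M1 \<Otimes>\<^sub>M M2)"
    using \<nu> \<rho> by (simp_all add: subcouplings_on_def couplings_def)
  have "?S \<le> emeasure \<nu> B + (?S - emeasure \<nu> B)"
    using ennreal_minus_le_iff by blast
  also have "\<dots> \<le> emeasure \<nu> B + emeasure \<rho> B + e"
    using approx by (simp add: add.assoc add_left_mono)
  also have "\<dots> = emeasure ?\<nu>' B + e"
    using sets B by (simp add: emeasure_add_measure emeasure_restricted)
  finally have "?S \<le> emeasure ?\<nu>' B + e" .
  moreover have "\<nu> \<le> ?\<nu>'"
    using sets by (intro le_add_measure) simp
  moreover have "?\<nu>' \<in> subcouplings_on M1 M2 l1 l2 B"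
    by (rule add_restricted_in_subcouplings_on[OF B \<nu> \<rho>])
  ultimately show ?thesis
    by blast
qed

theorem S_sup_attained:
  assumes B: "B \<in> sets (M1 \<Otimes>\<^sub>M M2)"
    and residual_S_sup: "\<And>\<nu>. \<nu> \<in> subcouplings_on M1 M2 l1 l2 B \<Longrightarrow>
      S_sup M1 M2 (measure_diff l1 (marg1 \<nu> M1)) (measure_diff l2 (marg2 \<nu> M2)) B
        = S_sup M1 M2 l1 l2 B - emeasure \<nu> B"
  shows "\<exists>\<mu>\<in>couplings M1 M2 l1 l2. emeasure \<mu> B = S_sup M1 M2 l1 l2 B"
proof -
  let ?S = "S_sup M1 M2 l1 l2 B" and ?P = "subcouplings_on M1 M2 l1 l2 B"
  note approx = subcouplings_on_approx_S_sup[OF B residual_S_sup]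
  have "\<exists>\<nu>. \<forall>n. \<nu> n \<in> ?P \<and> \<nu> n \<le> \<nu> (Suc n) \<and> ?S \<le> emeasure (\<nu> (Suc n)) B + ennreal (1 / Suc n)"
  proof (rule dependent_nat_choice[where P = "\<lambda>_ \<nu>. \<nu> \<in> ?P"])
    show "\<exists>\<nu>. \<nu> \<in> ?P"
      using null_measure_in_subcouplings_on by blast
    fix \<nu> n assume "\<nu> \<in> ?P"
    then show "\<exists>\<nu>'. \<nu>' \<in> ?P \<and> \<nu> \<le> \<nu>' \<and> ?S \<le> emeasure \<nu>' B + ennreal (1 / Suc n)"
      using approx[of \<nu> "1 / Suc n"] by auto
  qed
  then obtain \<nu> where \<nu>: "\<And>n. \<nu> n \<in> ?P"
    and "\<And>n. \<nu> n \<le> \<nu> (Suc n)" and close: "\<And>n. ?S \<le> emeasure (\<nu> (Suc n)) B + ennreal (1 / Suc n)"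
    by blast
  then have "incseq \<nu>"
    by (intro incseq_SucI)
  have sets_\<nu>: "sets (\<nu> n) = sets (M1 \<Otimes>\<^sub>M M2)" for n
    using \<nu> by (simp add: subcouplings_on_def)
  let ?\<nu>lim = "SUP n. \<nu> n"
  have "?S \<le> emeasure ?\<nu>lim B"
  proof (rule ennreal_le_epsilon)
    fix e :: real assume "0 < e"
    then obtain n where "1 / Suc n < e"
      by (rule nat_approx_posE)
    have "?S \<le> emeasure (\<nu> (Suc n)) B + ennreal (1 / Suc n)"
      by (rule close)
    also have "\<dots> \<le> emeasure ?\<nu>lim B + e"
      using \<open>1 / Suc n < e\<close> emeasure_SUP_incseq[OF \<open>incseq \<nu>\<close> sets_\<nu> B]
      by (intro add_mono) (auto intro: SUP_upper ennreal_leI)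
    finally show "?S \<le> emeasure ?\<nu>lim B + e" .
  qed
  moreover obtain \<mu> where \<mu>: "\<mu> \<in> couplings M1 M2 l1 l2" and "?\<nu>lim \<le> \<mu>"
    using subcoupling_le_coupling[OF SUP_in_subcouplings_on[OF B \<open>incseq \<nu>\<close> \<nu>]] by blast
  then have "emeasure ?\<nu>lim B \<le> emeasure \<mu> B"
    using sets_\<nu> \<mu> by (intro le_measureD3) (auto simp: sets_SUP couplings_def)
  moreover have "emeasure \<mu> B \<le> ?S"
    using \<mu> unfolding S_sup_def by (rule SUP_upper)
  ultimately show ?thesis
    using \<mu> by (intro bexI[of _ \<mu>] antisym) auto
qed

end

theorem lemma3p6:
  fixes M1 :: "'a measure" and M2 :: "'b measure"
    and mu1 :: "'a measure" and mu2 :: "'b measure"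
    and B :: "('a \<times> 'b) set"
  assumes "paper_space M1" and "paper_space M2"
    and "prob_space mu1" and "sets mu1 = sets M1"
    and "prob_space mu2" and "sets mu2 = sets M2"
    and "B \<in> sets (M1 \<Otimes>\<^sub>M M2)"
    and "\<And>nu. sets nu = sets (M1 \<Otimes>\<^sub>M M2) \<Longrightarrow>
           emeasure nu (space (M1 \<Otimes>\<^sub>M M2) - B) = 0 \<Longrightarrow>
           (\<forall>A\<in>sets M1. emeasure (marg1 nu M1) A \<le> emeasure mu1 A) \<Longrightarrow>
           (\<forall>A\<in>sets M2. emeasure (marg2 nu M2) A \<le> emeasure mu2 A) \<Longrightarrow>
           S_sup M1 M2 (measure_diff mu1 (marg1 nu M1)) (measure_diff mu2 (marg2 nu M2)) B
             = S_sup M1 M2 mu1 mu2 B - emeasure nu B"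
  shows "\<exists>mu\<in>couplings M1 M2 mu1 mu2. prob_space mu \<and> emeasure mu B = S_sup M1 M2 mu1 mu2 B"
proof -
  \<comment> \<open>The argument works on arbitrary measurable spaces.\<close>
  have mass_1: "emeasure mu1 (space M1) = 1" "emeasure mu2 (space M2) = 1"
    using prob_space.emeasure_space_1[OF assms(3)] prob_space.emeasure_space_1[OF assms(5)]
      sets_eq_imp_space_eq[OF assms(4)] sets_eq_imp_space_eq[OF assms(6)] by simp_all
  interpret equal_mass_marginals M1 M2 mu1 mu2
    using prob_space.axioms(1)[OF assms(3)] prob_space.axioms(1)[OF assms(5)] assms(4,6) mass_1
    by (intro equal_mass_marginals.intro) simp_all
  have residual_S_sup: "S_sup M1 M2 (measure_diff mu1 (marg1 \<nu> M1)) (measure_diff mu2 (marg2 \<nu> M2)) B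
      = S_sup M1 M2 mu1 mu2 B - emeasure \<nu> B" if "\<nu> \<in> subcouplings_on M1 M2 mu1 mu2 B" for \<nu>
    using that by (intro assms(8)) (simp_all add: subcouplings_on_def)
  obtain \<mu> where \<mu>: "\<mu> \<in> couplings M1 M2 mu1 mu2" "emeasure \<mu> B = S_sup M1 M2 mu1 mu2 B"
    using S_sup_attained[OF assms(7) residual_S_sup] by blast
  moreover have "prob_space \<mu>"
    using emeasure_space_coupling[OF \<mu>(1)] mass_1 by (intro prob_spaceI) simp
  ultimately show ?thesis
    by blast
qed

end
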